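(* In the setting described in the context, let $M^s\subseteq M_{k+n}$ and $w^{m,s}_{k+n}=\sum_{r\in M^s}w^r_{k+n}$. Then $$w^{m,s}_{k+n}\;\le\;\eta_{k+n}\;\le\;w^{m,s}_{k+n}+\Big(\frac{|M_{k+n}|}{|M_k|}-\sum_{r\in M^s}w_k^{r}\Big)\prod_{i=1}^{n}\sigma^i,$$ where $w_k^r$ denotes the prior weight $w_k^{a(r)}$ of the time-$k$ ancestor $a(r)$ of $r$, with repeated ancestors counted with multiplicity.
   Context: Setting (data-association-aware planning over a horizon $n\ge1$ from time $k$). The belief at time $k$ is a mixture over a finite nonempty set $M_k$ of hypotheses, with weights $w_k^j\ge0$ satisfying $\sum_{j\in M_k}w_k^j=1$. Let $D$ be a finite set of data-association realizations. At each look-ahead step $i=1,\dots,n$, every hypothesis $j$ at step $i-1$ spawns exactly $|D|$ child hypotheses $(j,\beta)$, one for each $\beta\in D$. Hence the set $M_{k+n}$ of hypotheses at step $n$ has $|M_{k+n}|=|M_k||D|^n$ elements, and each $r\in M_{k+n}$ has a unique ancestor $a(r)\in M_k$. Fix a sequence of future actions and future observations $Z_{k+1},\dots,Z_{k+n}$ (one path of the belief tree). The unnormalized hypothesis weights are defined recursively by the Bayesian weight update $$w_{k+i}^{(j,\beta)}=w_{k+i-1}^{j}\int \mathbb{P}(Z_{k+i}\mid x_{k+i},\beta)\,\mathbb{P}(\beta\mid x_{k+i})\,b^{j}_{k+i}(x_{k+i})\,dx_{k+i}.$$ Here $b^j_{k+i}$ is the probability density of the state $x_{k+i}$ under hypothesis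 $j$, propagated by the motion model; $\mathbb{P}(\beta\mid x_{k+i})\in[0,1]$; and $\mathbb{P}(Z_{k+i}\mid x_{k+i},\beta)$ is the measurement likelihood. Let $\sigma^i=\max\mathbb{P}(Z_{k+i}\mid x_{k+i})$ denote the maximum of the measurement likelihood of $Z_{k+i}$ over states (and associations), assumed finite. Finally, $\eta_{k+n}=\sum_{r\in M_{k+n}}w_{k+n}^r$. *)

theory Defs
  imports "HOL-Analysis.Analysis"
begin

text \<open>A hypothesis at look-ahead step i is a pair (j, bs) where j is its time-k
ancestor and bs is the list of the i data-association realizations chosen at steps
1..i, most recent first.\<close>

definition hyps :: "'h set \<Rightarrow> 'd set \<Rightarrow> nat \<Rightarrow> ('h \<times> 'd list) set" where
  "hyps Mk D i = {(j, bs). j \<in> Mk \<and> set bs \<subseteq> D \<and> length bs = i}"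

text \<open>Unnormalised hypothesis weights via the Bayesian weight update.
  w0: prior weights at time k; b h: density of x_{k+i} under the parent hypothesis h
  (at step i-1), where i = length of h's list + 1; L i x beta = P(Z_{k+i} | x, beta);
  Pa i x beta = P(beta | x_{k+i}).\<close>

fun hyp_weight ::
  "'x measure \<Rightarrow> ('h \<Rightarrow> real) \<Rightarrow> ('h \<times> 'd list \<Rightarrow> 'x \<Rightarrow> real)
   \<Rightarrow> (nat \<Rightarrow> 'x \<Rightarrow> 'd \<Rightarrow> real) \<Rightarrow> (nat \<Rightarrow> 'x \<Rightarrow> 'd \<Rightarrow> real)
   \<Rightarrow> 'h \<times> 'd list \<Rightarrow> real" where
  "hyp_weight M w0 b L Pa (j, []) = w0 j"
| "hyp_weight M w0 b L Pa (j, beta # bs) =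
     hyp_weight M w0 b L Pa (j, bs) *
     (\<integral>x. L (Suc (length bs)) x beta * Pa (Suc (length bs)) x beta * b (j, bs) x \<partial>M)"

definition max_lik :: "'x measure \<Rightarrow> 'd set \<Rightarrow> (nat \<Rightarrow> 'x \<Rightarrow> 'd \<Rightarrow> real) \<Rightarrow> nat \<Rightarrow> real" where
  "max_lik M D L i = Sup {L i x beta | x beta. x \<in> space M \<and> beta \<in> D}"

end

theory Submission
  imports Defs
begin

text \<open>Each weight update multiplies by the integral of \<open>L i \<cdot> Pa i\<close> against a probability
density; as \<open>0 \<le> Pa i \<le> 1\<close> and \<open>0 \<le> L i \<le> \<sigma> i\<close>, that factor lies in \<open>[0, \<sigma> i]\<close>. So every
hypothesis at step n weighs between 0 and its prior ancestor weight times \<open>\<sigma> 1 \<cdots> \<sigma> n\<close>.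
Splitting \<open>\<eta>\<close> into the part over \<open>Ms\<close> and the rest bounds the rest by the ancestor weights
outside \<open>Ms\<close> times that product, and since every prior weight is inherited by exactly
\<open>|D|\<^sup>n\<close> hypotheses, the ancestor weights of all of them sum to \<open>|D|\<^sup>n = |M\<^sub>k\<^sub>+\<^sub>n| / |M\<^sub>k|\<close>.\<close>

lemma hyps_eq_Times: "hyps Mk D n = Mk \<times> {bs. set bs \<subseteq> D \<and> length bs = n}"
  unfolding hyps_def by auto

lemma finite_hyps: "finite Mk \<Longrightarrow> finite D \<Longrightarrow> finite (hyps Mk D n)"
  by (simp add: hyps_eq_Times finite_lists_length_eq)

lemma card_hyps_div_card:
  assumes "finite Mk" "Mk \<noteq> {}" "finite D"
  shows "real (card (hyps Mk D n)) / real (card Mk) = real (card D) ^ n"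
  using assms by (simp add: hyps_eq_Times card_cartesian_product card_lists_length_eq)

lemma sum_ancestor_weight_hyps:
  assumes "finite Mk" "finite D" "(\<Sum>j\<in>Mk. w0 j) = 1"
  shows "(\<Sum>r\<in>hyps Mk D n. w0 (fst r)) = real (card D) ^ n"
proof -
  let ?B = "{bs. set bs \<subseteq> D \<and> length bs = n}"
  have "(\<Sum>r\<in>hyps Mk D n. w0 (fst r)) = (\<Sum>j\<in>Mk. \<Sum>bs\<in>?B. w0 j)"
    unfolding hyps_eq_Times
    using sum.cartesian_product[of "\<lambda>j bs. w0 j" ?B Mk] by (simp add: split_def)
  also have "\<dots> = real (card ?B) * (\<Sum>j\<in>Mk. w0 j)"
    by (simp add: sum_distrib_left)
  finally show ?thesis
    using assms by (simp add: card_lists_length_eq)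
qed

lemma max_lik_upper:
  assumes "bdd_above {L i x beta | x beta. x \<in> space M \<and> beta \<in> D}"
    and "x \<in> space M" "beta \<in> D"
  shows "L i x beta \<le> max_lik M D L i"
  unfolding max_lik_def by (rule cSup_upper) (use assms in auto)

lemma integral_mult_density_bounds:
  fixes g p :: "'x \<Rightarrow> real"
  assumes g: "g \<in> borel_measurable M" "\<And>x. x \<in> space M \<Longrightarrow> 0 \<le> g x \<and> g x \<le> c"
    and p: "p \<in> borel_measurable M" "\<And>x. x \<in> space M \<Longrightarrow> 0 \<le> p x"
      "integrable M p" "(\<integral>x. p x \<partial>M) = 1"
  shows "0 \<le> (\<integral>x. g x * p x \<partial>M) \<and> (\<integral>x. g x * p x \<partial>M) \<le> c"
proof -
  have pointwise: "0 \<le> g x * p x \<and> g x * p x \<le> c * p x" if "x \<in> space M" for x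
    using g(2)[OF that] p(2)[OF that] by (simp add: mult_right_mono)
  have cp: "integrable M (\<lambda>x. c * p x)"
    using p(3) by simp
  have gp: "integrable M (\<lambda>x. g x * p x)"
    by (rule Bochner_Integration.integrable_bound[OF cp])
       (use g(1) p(1) pointwise in \<open>auto intro!: AE_I2 order.trans[OF _ abs_ge_self]\<close>)
  have "0 \<le> (\<integral>x. g x * p x \<partial>M)"
    using pointwise by (auto intro!: integral_nonneg_AE AE_I2)
  moreover have "(\<integral>x. g x * p x \<partial>M) \<le> (\<integral>x. c * p x \<partial>M)"
    using pointwise by (intro Bochner_Integration.integral_mono[OF gp cp]) auto
  ultimately show ?thesis
    using p(4) by simp
qed

lemma hyp_weight_bounds:
  assumes "j \<in> Mk" "0 \<le> w0 j" "set bs \<subseteq> D" "length bs \<le> n"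
    and factor: "\<And>i h beta. 1 \<le> i \<Longrightarrow> i \<le> n \<Longrightarrow> h \<in> hyps Mk D (i - 1) \<Longrightarrow> beta \<in> D \<Longrightarrow>
      0 \<le> (\<integral>x. L i x beta * Pa i x beta * b h x \<partial>M) \<and>
      (\<integral>x. L i x beta * Pa i x beta * b h x \<partial>M) \<le> s i"
  shows "0 \<le> hyp_weight M w0 b L Pa (j, bs) \<and>
    hyp_weight M w0 b L Pa (j, bs) \<le> w0 j * (\<Prod>i=1..length bs. s i)"
  using assms(3,4)
proof (induction bs)
  case Nil
  then show ?case
    using assms(2) by simp
next
  case (Cons beta bs)
  let ?W = "hyp_weight M w0 b L Pa (j, bs)"
  let ?c = "\<integral>x. L (Suc (length bs)) x beta * Pa (Suc (length bs)) x beta * b (j, bs) x \<partial>M"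
  have IH: "0 \<le> ?W" "?W \<le> w0 j * (\<Prod>i=1..length bs. s i)"
    using Cons by auto
  have "(j, bs) \<in> hyps Mk D (Suc (length bs) - 1)"
    using Cons.prems \<open>j \<in> Mk\<close> unfolding hyps_def by auto
  then have c: "0 \<le> ?c" "?c \<le> s (Suc (length bs))"
    using factor[of "Suc (length bs)"] Cons.prems by auto
  have "hyp_weight M w0 b L Pa (j, beta # bs) = ?W * ?c"
    by simp
  also have "\<dots> \<le> (w0 j * (\<Prod>i=1..length bs. s i)) * s (Suc (length bs))"
    by (rule mult_mono[OF IH(2) c(2) _ c(1)]) (use IH in linarith)
  also have "\<dots> = w0 j * (\<Prod>i=1..length (beta # bs). s i)"
    by (simp add: prod.nat_ivl_Suc')
  finally show ?case
    using IH c by simp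
qed

lemma sum_bounds_by_subset:
  fixes W v :: "'a \<Rightarrow> real"
  assumes "finite A" "B \<subseteq> A" "\<And>r. r \<in> A \<Longrightarrow> 0 \<le> W r \<and> W r \<le> v r * S"
  shows "sum W B \<le> sum W A \<and> sum W A \<le> sum W B + (sum v A - sum v B) * S"
proof -
  have W: "sum W A = sum W B + sum W (A - B)" and v: "sum v A = sum v B + sum v (A - B)"
    using sum.subset_diff[OF assms(2,1)] by (simp_all add: add.commute)
  have "0 \<le> sum W (A - B)"
    using assms(3) by (auto intro!: sum_nonneg)
  moreover have "sum W (A - B) \<le> sum v (A - B) * S"
    unfolding sum_distrib_right using assms(3) by (auto intro!: sum_mono)
  ultimately show ?thesis
    using W v by simp
qed

theorem theorem3:
  fixes Mk :: "'h set" and D :: "'d set" and n :: nat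
    and w0 :: "'h \<Rightarrow> real" and M :: "'x measure"
    and b :: "'h \<times> 'd list \<Rightarrow> 'x \<Rightarrow> real"
    and L :: "nat \<Rightarrow> 'x \<Rightarrow> 'd \<Rightarrow> real"
    and Pa :: "nat \<Rightarrow> 'x \<Rightarrow> 'd \<Rightarrow> real"
    and Ms :: "('h \<times> 'd list) set"
  assumes "n \<ge> 1"
    and "finite Mk" and "Mk \<noteq> {}" and "finite D"
    and "\<forall>j\<in>Mk. w0 j \<ge> 0" and "(\<Sum>j\<in>Mk. w0 j) = 1"
    and dens: "\<And>i h. 1 \<le> i \<Longrightarrow> i \<le> n \<Longrightarrow> h \<in> hyps Mk D (i - 1) \<Longrightarrow>
        b h \<in> borel_measurable M \<and> (\<forall>x\<in>space M. b h x \<ge> 0) \<and>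
        integrable M (b h) \<and> (\<integral>x. b h x \<partial>M) = 1"
    and assoc: "\<And>i x beta. 1 \<le> i \<Longrightarrow> i \<le> n \<Longrightarrow> x \<in> space M \<Longrightarrow> beta \<in> D \<Longrightarrow>
        0 \<le> Pa i x beta \<and> Pa i x beta \<le> 1"
    and assoc_meas: "\<And>i beta. 1 \<le> i \<Longrightarrow> i \<le> n \<Longrightarrow> beta \<in> D \<Longrightarrow>
        (\<lambda>x. Pa i x beta) \<in> borel_measurable M"
    and lik: "\<And>i x beta. 1 \<le> i \<Longrightarrow> i \<le> n \<Longrightarrow> x \<in> space M \<Longrightarrow> beta \<in> D \<Longrightarrow>
        0 \<le> L i x beta"
    and lik_meas: "\<And>i beta. 1 \<le> i \<Longrightarrow> i \<le> n \<Longrightarrow> beta \<in> D \<Longrightarrow>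
        (\<lambda>x. L i x beta) \<in> borel_measurable M"
    and lik_fin: "\<And>i. 1 \<le> i \<Longrightarrow> i \<le> n \<Longrightarrow>
        bdd_above {L i x beta | x beta. x \<in> space M \<and> beta \<in> D}"
    and "Ms \<subseteq> hyps Mk D n"
  shows "(\<Sum>r\<in>Ms. hyp_weight M w0 b L Pa r) \<le> (\<Sum>r\<in>hyps Mk D n. hyp_weight M w0 b L Pa r)
       \<and> (\<Sum>r\<in>hyps Mk D n. hyp_weight M w0 b L Pa r)
           \<le> (\<Sum>r\<in>Ms. hyp_weight M w0 b L Pa r)
             + (real (card (hyps Mk D n)) / real (card Mk) - (\<Sum>r\<in>Ms. w0 (fst r)))
               * (\<Prod>i=1..n. max_lik M D L i)"
proof -
  have factor: "0 \<le> (\<integral>x. L i x beta * Pa i x beta * b h x \<partial>M) \<and>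
      (\<integral>x. L i x beta * Pa i x beta * b h x \<partial>M) \<le> max_lik M D L i"
    if i: "1 \<le> i" "i \<le> n" and "h \<in> hyps Mk D (i - 1)" "beta \<in> D" for i h beta
  proof (rule integral_mult_density_bounds)
    fix x assume x: "x \<in> space M"
    have "L i x beta * Pa i x beta \<le> L i x beta"
      using assoc[OF i x \<open>beta \<in> D\<close>] lik[OF i x \<open>beta \<in> D\<close>] by (simp add: mult_left_le)
    then show "0 \<le> L i x beta * Pa i x beta \<and> L i x beta * Pa i x beta \<le> max_lik M D L i"
      using assoc[OF i x \<open>beta \<in> D\<close>] lik[OF i x \<open>beta \<in> D\<close>]
        max_lik_upper[where L = L and i = i, OF lik_fin[OF i] x \<open>beta \<in> D\<close>] by simp
  qed (use that dens[OF i] lik_meas[OF i] assoc_meas[OF i] in auto)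
  have weight: "0 \<le> hyp_weight M w0 b L Pa r \<and>
      hyp_weight M w0 b L Pa r \<le> w0 (fst r) * (\<Prod>i=1..n. max_lik M D L i)"
    if "r \<in> hyps Mk D n" for r
    using that hyp_weight_bounds[of "fst r" Mk w0 "snd r" D n, OF _ _ _ _ factor] assms(5)
    unfolding hyps_def by (cases r) auto
  show ?thesis
    using sum_bounds_by_subset[where W = "hyp_weight M w0 b L Pa" and v = "\<lambda>r. w0 (fst r)",
        OF finite_hyps[OF assms(2,4)] assms(13) weight]
    unfolding sum_ancestor_weight_hyps[OF assms(2,4,6)] card_hyps_div_card[OF assms(2,3,4)] .
qed

end
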